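(* Let $\mathbf G$ and $\widetilde{\mathbf G}$ be finite oriented metric graphs, where $\widetilde{\mathbf G}$ is obtained from $\mathbf G$ by reversing the orientation of the edges in a subset $\mathcal J_-\subset\mathcal J$ (as described in the context), let $\Lambda$ be a linear relation in their common vertex space $\mathcal F$, let $D^{\Lambda_W}$ be the restriction of $D^{max}$ to $\{\Phi\in\widetilde H^1(\mathbf G;\mathbb C^2):(W\Gamma^1\Phi,W\Gamma^2\Phi)\in\Lambda\}$ and $\widetilde D^{\Lambda_{\widetilde W}}$ the restriction of $\widetilde D^{max}$ to $\{\widetilde\Phi\in\widetilde H^1(\widetilde{\mathbf G};\mathbb C^2):(\widetilde W\widetilde\Gamma^1\widetilde\Phi,\widetilde W\widetilde\Gamma^2\widetilde\Phi)\in\Lambda\}$. Then $$\widetilde D^{\Lambda_{\widetilde W}}P_{\mathcal J_-}=P_{\mathcal J_-}D^{\Lambda_W}.$$ In particular, $\widetilde D^{\Lambda_{\widetilde W}}$ and $D^{\Lambda_W}$ are unitarily equivalent.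
   Context: Let $m\ge0$. A finite oriented metric graph has a finite nonempty vertex set $\mathcal V$, finite sets $\mathcal I$ (internal) and $\mathcal E$ (external) of edges, $\mathcal J=\mathcal I\cup\mathcal E\ne\emptyset$, no loops. Each internal edge $i$ has initial vertex $\partial_-i$ and terminal vertex $\partial_+i$ and is identified with $I_i=(a_i,b_i)$, $a_i\leftrightarrow\partial_-i$, $b_i\leftrightarrow\partial_+i$. An external edge $e$ attached to a vertex is identified with $(a_e,+\infty)$ if the vertex is its initial vertex ($\rho(e)=-1$) or with $(-\infty,b_e)$ if it is its terminal vertex ($\rho(e)=1$); $\partial e$ is the finite endpoint. Data on a graph: $\mathscr H=\bigoplus_jL^2(I_j;\mathbb C^2)$; $\widetilde H^1=\bigoplus_jH^1(I_j;\mathbb C^2)$; $D^{max}$ acts edgewise by $-i\sigma_1\phi_j'+m\sigma_3\phi_j$ ($\sigma_1=\begin{pmatrix}0&1\\1&0\end{pmatrix}$, $\sigma_3=\operatorname{diag}(1,-1)$); $\mathcal G=\bigoplus_j\mathcal G_j$, $\mathcal G_i=\mathbb C^2$, $\mathcal G_e=\mathbb C$; $\Gamma^1_i\Phi=(\phi_i^1(a_i),\phi_i^1(b_i))^T$, $\Gamma^2_i\Phi=(i\phi_i^2(a_i),-i\phi_i^2(b_i))^T$, $\Gamma^1_e\Phi=\phi_e^1(\partial e)$, $\Gamma^2_e\Phi=-i\rho(e)\phi^2_e(\partial e)$, $\Gamma^k=\bigoplus_j\Gamma^k_j$; vertex space $\mathcal F=\bigoplus_v\mathbb C^{\deg v}$;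 coordinates of $\mathcal G$ and $\mathcal F$ are labelled by pairs $(j,v)$, $v$ a vertex endpoint of $j$; in $\mathcal G$ ordered edge by edge in a fixed edge order (for internal edges the pair with the initial vertex first), in $\mathcal F$ vertex by vertex in a fixed vertex order and within a vertex by the fixed edge order; $W:\mathcal G\to\mathcal F$ is the permutation matrix sending coordinate $(j,v)$ of $\mathcal G$ to coordinate $(j,v)$ of $\mathcal F$. The graph $\widetilde{\mathbf G}$ has the same vertices and edges (with the same fixed orders) but for $j\in\mathcal J_-$ the initial and terminal vertices are swapped; an edge $j\in\mathcal J_-$ with interval $(a,b)$ in $\mathbf G$ (where $a$ or $b$ may be infinite) gets the interval $(-b,-a)$ in $\widetilde{\mathbf G}$, while edges in $\mathcal J\setminus\mathcal J_-$ keep their intervals. $\widetilde{\mathscr H},\widetilde D^{max},\widetilde\Gamma^1,\widetilde\Gamma^2,\widetilde W$ are defined by the same rules for $\widetilde{\mathbf G}$ (so $\mathcal F$ and its ordering coincide, but in $\widetilde{\mathcal G}=\mathcal G$ the order of the two pairs belonging to an internal edge in $\mathcal J_-$ is swapped). $P_{\mathcal J_-}:\mathscr H\to\widetilde{\mathscr H}$ is $\bigoplus_jP_{\mathcal J_-,j}$ with $P_{\mathcal J_-,j}$ the identity for $j\notin\mathcal J_-$ and $(P_{\mathcal J_-,j}\phi)(\tilde x)=\sigma_3\phi(-\tilde x)$ for $j\in\mathcal J_-$. *)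

theory Defs
  imports "HOL-Analysis.Analysis"
begin

text \<open>The edge j is
identified with the open interval (lo j, hi j) (extended reals).  An external
edge is attached to ini e if it is (a_e, +infinity) (rho e = -1) and to ter e if it
is (-infinity, b_e) (rho e = 1); the other vertex field is unused.\<close>

record ('v, 'e) mgraph =
  verts  :: "'v set"
  iedges :: "'e set"
  eedges :: "'e set"
  ini    :: "'e \<Rightarrow> 'v"
  ter    :: "'e \<Rightarrow> 'v"
  lo     :: "'e \<Rightarrow> ereal"
  hi     :: "'e \<Rightarrow> ereal"

definition edges :: "('v, 'e) mgraph \<Rightarrow> 'e set" where
  "edges G = iedges G \<union> eedges G"

definition mgraph_wf :: "('v, 'e) mgraph \<Rightarrow> bool" where
  "mgraph_wf G \<longleftrightarrow>
     finite (verts G) \<and> verts G \<noteq> {} \<and> finite (iedges G) \<and> finite (eedges G) \<and>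
     iedges G \<inter> eedges G = {} \<and> edges G \<noteq> {} \<and>
     (\<forall>i\<in>iedges G. ini G i \<in> verts G \<and> ter G i \<in> verts G \<and> ini G i \<noteq> ter G i \<and>
        (\<exists>a b. lo G i = ereal a \<and> hi G i = ereal b \<and> a < b)) \<and>
     (\<forall>e\<in>eedges G.
        (ini G e \<in> verts G \<and> (\<exists>a. lo G e = ereal a) \<and> hi G e = \<infinity>) \<or>
        (ter G e \<in> verts G \<and> lo G e = -\<infinity> \<and> (\<exists>b. hi G e = ereal b)))"

definition rho :: "('v, 'e) mgraph \<Rightarrow> 'e \<Rightarrow> complex" where
  "rho G e = (if hi G e = \<infinity> then -1 else 1)"

definition edge_set :: "('v, 'e) mgraph \<Rightarrow> 'e \<Rightarrow> real set" where
  "edge_set G j = {x. lo G j < ereal x \<and> ereal x < hi G j}"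

definition aa :: "('v, 'e) mgraph \<Rightarrow> 'e \<Rightarrow> real" where
  "aa G j = real_of_ereal (lo G j)"

definition bb :: "('v, 'e) mgraph \<Rightarrow> 'e \<Rightarrow> real" where
  "bb G j = real_of_ereal (hi G j)"

definition rev_graph :: "('v, 'e) mgraph \<Rightarrow> 'e set \<Rightarrow> ('v, 'e) mgraph" where
  "rev_graph G Jm = G\<lparr> ini := (\<lambda>j. if j \<in> Jm then ter G j else ini G j),
                      ter := (\<lambda>j. if j \<in> Jm then ini G j else ter G j),
                      lo  := (\<lambda>j. if j \<in> Jm then - hi G j else lo G j),
                      hi  := (\<lambda>j. if j \<in> Jm then - lo G j else hi G j) \<rparr>"

definition L2_on :: "real set \<Rightarrow> (real \<Rightarrow> 'a::real_normed_vector) \<Rightarrow> bool" where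
  "L2_on I f \<longleftrightarrow> f \<in> borel_measurable (lebesgue_on I) \<and>
                 integrable (lebesgue_on I) (\<lambda>x. (norm (f x))\<^sup>2)"

text \<open>u is the continuous representative (extended continuously to the closure)
of an H^1 function on I with weak derivative g.\<close>
definition H1_rep :: "real set \<Rightarrow> (real \<Rightarrow> 'a::real_normed_vector) \<Rightarrow> (real \<Rightarrow> 'a) \<Rightarrow> bool" where
  "H1_rep I u g \<longleftrightarrow> continuous_on (closure I) u \<and> L2_on I u \<and> L2_on I g \<and>
     (\<forall>x\<in>I. \<forall>y\<in>I. x \<le> y \<longrightarrow> (g has_integral (u y - u x)) {x..y})"

text \<open>Edgewise Dirac expression  -i sigma_1 phi' + m sigma_3 phi  for phi = (p,q).\<close>
definition dirac :: "real \<Rightarrow> complex \<times> complex \<Rightarrow> complex \<times> complex \<Rightarrow> complex \<times> complex" where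
  "dirac m phi dphi = (- \<i> * snd dphi + complex_of_real m * fst phi,
                       - \<i> * fst dphi - complex_of_real m * snd phi)"

text \<open>Vectors in the vertex space F (and in G) are represented by their coordinates,
which are labelled by pairs (j,v), v a vertex endpoint of j; other labels carry 0.
W sends the coordinate (j,v) of G to the coordinate (j,v) of F, hence the following
maps are W Gamma^1 and W Gamma^2 written in labelled coordinates.\<close>

definition WGamma1 :: "('v, 'e) mgraph \<Rightarrow> ('e \<Rightarrow> real \<Rightarrow> complex \<times> complex) \<Rightarrow> ('e \<times> 'v \<Rightarrow> complex)" where
  "WGamma1 G U = (\<lambda>(j, v).
     if j \<in> iedges G \<and> v = ini G j then fst (U j (aa G j))
     else if j \<in> iedges G \<and> v = ter G j then fst (U j (bb G j))
     else if j \<in> eedges G \<and> rho G j = -1 \<and> v = ini G j then fst (U j (aa G j))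
     else if j \<in> eedges G \<and> rho G j = 1 \<and> v = ter G j then fst (U j (bb G j))
     else 0)"

definition WGamma2 :: "('v, 'e) mgraph \<Rightarrow> ('e \<Rightarrow> real \<Rightarrow> complex \<times> complex) \<Rightarrow> ('e \<times> 'v \<Rightarrow> complex)" where
  "WGamma2 G U = (\<lambda>(j, v).
     if j \<in> iedges G \<and> v = ini G j then \<i> * snd (U j (aa G j))
     else if j \<in> iedges G \<and> v = ter G j then - \<i> * snd (U j (bb G j))
     else if j \<in> eedges G \<and> rho G j = -1 \<and> v = ini G j then - \<i> * rho G j * snd (U j (aa G j))
     else if j \<in> eedges G \<and> rho G j = 1 \<and> v = ter G j then - \<i> * rho G j * snd (U j (bb G j))
     else 0)"

definition labels :: "('v, 'e) mgraph \<Rightarrow> ('e \<times> 'v) set" where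
  "labels G = {(i, ini G i) | i. i \<in> iedges G} \<union> {(i, ter G i) | i. i \<in> iedges G} \<union>
              {(e, ini G e) | e. e \<in> eedges G \<and> rho G e = -1} \<union>
              {(e, ter G e) | e. e \<in> eedges G \<and> rho G e = 1}"

definition vertex_space :: "('v, 'e) mgraph \<Rightarrow> ('e \<times> 'v \<Rightarrow> complex) set" where
  "vertex_space G = {x. \<forall>l. l \<notin> labels G \<longrightarrow> x l = 0}"

definition linear_relation :: "('e \<times> 'v \<Rightarrow> complex) set \<Rightarrow>
    (('e \<times> 'v \<Rightarrow> complex) \<times> ('e \<times> 'v \<Rightarrow> complex)) set \<Rightarrow> bool" where
  "linear_relation F \<Lambda> \<longleftrightarrow> \<Lambda> \<subseteq> F \<times> F \<and> ((\<lambda>l. 0), (\<lambda>l. 0)) \<in> \<Lambda> \<and>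
     (\<forall>p\<in>\<Lambda>. \<forall>q\<in>\<Lambda>. ((\<lambda>l. fst p l + fst q l), (\<lambda>l. snd p l + snd q l)) \<in> \<Lambda>) \<and>
     (\<forall>c::complex. \<forall>p\<in>\<Lambda>. ((\<lambda>l. c * fst p l), (\<lambda>l. c * snd p l)) \<in> \<Lambda>)"

text \<open>Graph of the operator D^{Lambda_W} on the Hilbert space of edgewise
L^2 functions (elements are represented by functions, equality edgewise a.e.):
(Phi, Psi) is in the graph iff Phi has a representative U in H~^1 (with weak
derivative Up) satisfying the vertex condition (W Gamma^1 U, W Gamma^2 U) in Lambda,
and Psi = D^max U a.e. on every edge.\<close>
definition D_graph :: "('v, 'e) mgraph \<Rightarrow> real \<Rightarrow>
    (('e \<times> 'v \<Rightarrow> complex) \<times> ('e \<times> 'v \<Rightarrow> complex)) set \<Rightarrow>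
    ('e \<Rightarrow> real \<Rightarrow> complex \<times> complex) \<Rightarrow> ('e \<Rightarrow> real \<Rightarrow> complex \<times> complex) \<Rightarrow> bool" where
  "D_graph G m \<Lambda> Phi Psi \<longleftrightarrow>
     (\<exists>U Up. (\<forall>j\<in>edges G.
                H1_rep (edge_set G j) (U j) (Up j) \<and>
                (AE x in lebesgue_on (edge_set G j). Phi j x = U j x) \<and>
                (AE x in lebesgue_on (edge_set G j). Psi j x = dirac m (U j x) (Up j x))) \<and>
             (WGamma1 G U, WGamma2 G U) \<in> \<Lambda>)"

definition sigma3 :: "complex \<times> complex \<Rightarrow> complex \<times> complex" where
  "sigma3 z = (fst z, - snd z)"

definition P_op :: "'e set \<Rightarrow> ('e \<Rightarrow> real \<Rightarrow> complex \<times> complex) \<Rightarrow> ('e \<Rightarrow> real \<Rightarrow> complex \<times> complex)" where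
  "P_op Jm Phi = (\<lambda>j x. if j \<in> Jm then sigma3 (Phi j (- x)) else Phi j x)"

end

theory Submission
  imports Defs
begin

text \<open>On an edge of \<open>J_-\<close>, \<open>P\<close> is \<open>u \<mapsto> \<sigma>\<^sub>3 u(-\<cdot>)\<close>, an involutive isometry of \<open>L\<^sup>2\<close>
because \<open>x \<mapsto> -x\<close> preserves Lebesgue measure. It maps an \<open>H\<^sup>1\<close> function with derivative \<open>u'\<close>
to one with derivative \<open>-\<sigma>\<^sub>3 u'(-\<cdot>)\<close>, and since \<open>\<sigma>\<^sub>3\<close> anticommutes with \<open>\<sigma>\<^sub>1\<close> and commutes with
itself it intertwines the Dirac expressions. Reversing the edge exchanges its endpoints, so
the boundary values are only relabelled, and the sign that \<open>\<sigma>\<^sub>3\<close> puts on the second component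
cancels the orientation sign in \<open>\<Gamma>\<^sup>2\<close>: \<open>W\<Gamma>\<^sup>1\<close> and \<open>W\<Gamma>\<^sup>2\<close> are unchanged, and with them the
vertex condition. Applying the same argument to the reversed graph gives the converse.\<close>

lemma measurable_uminus_lebesgue: "(uminus :: real \<Rightarrow> real) \<in> lebesgue \<rightarrow>\<^sub>M lebesgue"
  using lebesgue_affine_measurable[where c="\<lambda>_::real. -1" and t=0] by simp

lemma uminus_image_eq_vimage: "uminus ` (S :: 'a::group_add set) = uminus -` S"
  by (force simp: image_iff)

lemma sets_lebesgue_uminus_image:
  fixes S :: "real set"
  assumes "S \<in> sets lebesgue"
  shows "uminus ` S \<in> sets lebesgue"
  using measurable_sets[OF measurable_uminus_lebesgue assms] by (simp add: uminus_image_eq_vimage)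

lemma measurable_uminus_lebesgue_on:
  "(uminus :: real \<Rightarrow> real) \<in> lebesgue_on (uminus ` S) \<rightarrow>\<^sub>M lebesgue_on S"
  by (rule measurable_restrict_space3[OF measurable_uminus_lebesgue]) auto

lemma distr_uminus_lebesgue_on:
  fixes S :: "real set"
  assumes S: "S \<in> sets lebesgue"
  shows "distr (lebesgue_on (uminus ` S)) (lebesgue_on S) uminus = lebesgue_on S"
proof (rule measure_eqI)
  fix A assume "A \<in> sets (distr (lebesgue_on (uminus ` S)) (lebesgue_on S) uminus)"
  then have A: "A \<in> sets (lebesgue_on S)" by simp
  then have "A \<subseteq> S"
    using S by (auto simp: sets_restrict_space_iff)
  have "uminus -` A \<inter> space (lebesgue_on (uminus ` S)) = uminus ` A"
    using \<open>A \<subseteq> S\<close> by (auto simp: uminus_image_eq_vimage)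
  then have "emeasure (distr (lebesgue_on (uminus ` S)) (lebesgue_on S) uminus) A
      = emeasure (lebesgue_on (uminus ` S)) (uminus ` A)"
    by (simp add: emeasure_distr[OF measurable_uminus_lebesgue_on A])
  also have "\<dots> = emeasure lebesgue (uminus ` A)"
    using S \<open>A \<subseteq> S\<close> by (intro emeasure_restrict_space) (auto simp: sets_lebesgue_uminus_image)
  also have "\<dots> = emeasure lebesgue A"
    using emeasure_lebesgue_affine[of "-1" 0 A] by simp
  also have "\<dots> = emeasure (lebesgue_on S) A"
    using S \<open>A \<subseteq> S\<close> by (simp add: emeasure_restrict_space)
  finally show "emeasure (distr (lebesgue_on (uminus ` S)) (lebesgue_on S) uminus) A
      = emeasure (lebesgue_on S) A" .
qed simp

lemma AE_lebesgue_on_uminus_image: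
  fixes S :: "real set"
  assumes "S \<in> sets lebesgue" and "AE x in lebesgue_on S. P x"
  shows "AE x in lebesgue_on (uminus ` S). P (- x)"
proof (rule AE_distrD[OF measurable_uminus_lebesgue_on])
  show "AE x in distr (lebesgue_on (uminus ` S)) (lebesgue_on S) uminus. P x"
    unfolding distr_uminus_lebesgue_on[OF assms(1)] by (rule assms(2))
qed

lemma uminus_image_uminus_image [simp]: "uminus ` uminus ` (S :: 'a::group_add set) = S"
  by (simp add: image_image)

lemma integrable_lebesgue_on_uminus_image:
  fixes S :: "real set" and f :: "real \<Rightarrow> 'a::{banach, second_countable_topology}"
  assumes "S \<in> sets lebesgue" and "integrable (lebesgue_on S) f"
  shows "integrable (lebesgue_on (uminus ` S)) (\<lambda>x. f (- x))"
  using integrable_distr_eq[OF measurable_uminus_lebesgue_on, of f S] assms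
  by (simp add: distr_uminus_lebesgue_on)

lemma integrable_lebesgue_on_uminus_image_iff:
  fixes S :: "real set" and f :: "real \<Rightarrow> 'a::{banach, second_countable_topology}"
  assumes "S \<in> sets lebesgue"
  shows "integrable (lebesgue_on (uminus ` S)) (\<lambda>x. f (- x)) \<longleftrightarrow> integrable (lebesgue_on S) f"
  using integrable_lebesgue_on_uminus_image[of S f]
    integrable_lebesgue_on_uminus_image[of "uminus ` S" "\<lambda>x. f (- x)"] assms
  by (auto simp: sets_lebesgue_uminus_image)

lemma integral_lebesgue_on_uminus_image:
  fixes S :: "real set" and f :: "real \<Rightarrow> 'a::{banach, second_countable_topology}"
  assumes S: "S \<in> sets lebesgue"
  shows "integral\<^sup>L (lebesgue_on (uminus ` S)) (\<lambda>x. f (- x)) = integral\<^sup>L (lebesgue_on S) f"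
proof (cases "integrable (lebesgue_on S) f")
  case True
  then show ?thesis
    using integral_distr[OF measurable_uminus_lebesgue_on, of f S] S
    by (simp add: distr_uminus_lebesgue_on)
next
  case False
  then show ?thesis
    using S by (simp add: integrable_lebesgue_on_uminus_image_iff not_integrable_integral_eq)
qed

lemma measurable_lebesgue_on_uminus_image:
  fixes f :: "real \<Rightarrow> 'a::topological_space"
  assumes "f \<in> borel_measurable (lebesgue_on S)"
  shows "(\<lambda>x. f (- x)) \<in> borel_measurable (lebesgue_on (uminus ` S))"
  using measurable_comp[OF measurable_uminus_lebesgue_on assms] by (simp add: o_def)

lemma L2_on_uminus_image:
  assumes "S \<in> sets lebesgue" and "L2_on S f"
  shows "L2_on (uminus ` S) (\<lambda>x. f (- x))"
  using assms measurable_lebesgue_on_uminus_image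
    integrable_lebesgue_on_uminus_image[where f="\<lambda>x. (norm (f x))\<^sup>2"]
  unfolding L2_on_def by blast

lemma L2_on_uminus_image_iff:
  assumes "S \<in> sets lebesgue"
  shows "L2_on (uminus ` S) (\<lambda>x. f (- x)) \<longleftrightarrow> L2_on S f"
  using L2_on_uminus_image[of S f] L2_on_uminus_image[of "uminus ` S" "\<lambda>x. f (- x)"] assms
  by (auto simp: sets_lebesgue_uminus_image)

lemma L2_on_compose_isometry:
  assumes "bounded_linear h" and "\<And>z. norm (h z) = norm z" and "L2_on S f"
  shows "L2_on S (\<lambda>x. h (f x))"
proof -
  have "h \<in> borel_measurable borel"
    using assms(1) by (intro borel_measurable_continuous_onI linear_continuous_on)
  then show ?thesis
    using assms(2,3) measurable_compose unfolding L2_on_def by auto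
qed

lemma closure_uminus_image: "closure (uminus ` S) = uminus ` closure (S :: real set)"
  using closure_injective_linear_image[of uminus S] by (simp add: linear_uminus)

lemma H1_rep_uminus_image:
  assumes S: "S \<in> sets lebesgue" and H: "H1_rep S u g"
  shows "H1_rep (uminus ` S) (\<lambda>x. u (- x)) (\<lambda>x. - g (- x))"
  unfolding H1_rep_def
proof (intro conjI ballI impI)
  have "continuous_on (closure S) u"
    using H by (simp add: H1_rep_def)
  then show "continuous_on (closure (uminus ` S)) (\<lambda>x. u (- x))"
    unfolding closure_uminus_image
    by (rule continuous_on_compose2) (auto intro: continuous_intros)
  show "L2_on (uminus ` S) (\<lambda>x. u (- x))"
    using H S by (simp add: H1_rep_def L2_on_uminus_image)
  show "L2_on (uminus ` S) (\<lambda>x. - g (- x))"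
    using H S by (intro L2_on_compose_isometry[of uminus] bounded_linear_minus bounded_linear_ident)
      (auto simp: H1_rep_def L2_on_uminus_image)
  fix x y assume "x \<in> uminus ` S" "y \<in> uminus ` S" "x \<le> y"
  then have "(g has_integral (u (- x) - u (- y))) {- y..- x}"
    using H by (auto simp: H1_rep_def)
  then have "((\<lambda>t. g (- t)) has_integral (u (- x) - u (- y))) {x..y}"
    using has_integral_reflect_real[of g _ "- x" "- y"] by simp
  from has_integral_neg[OF this] show "((\<lambda>t. - g (- t)) has_integral (u (- y) - u (- x))) {x..y}"
    by simp
qed

lemma H1_rep_compose_isometry:
  assumes h: "bounded_linear h" "\<And>z. norm (h z) = norm z" and H: "H1_rep S u g"
  shows "H1_rep S (\<lambda>x. h (u x)) (\<lambda>x. h (g x))"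
  unfolding H1_rep_def
proof (intro conjI ballI impI)
  have "continuous_on (closure S) u"
    using H by (simp add: H1_rep_def)
  then show "continuous_on (closure S) (\<lambda>x. h (u x))"
    by (rule continuous_on_compose2[OF linear_continuous_on[OF h(1)]]) auto
  show "L2_on S (\<lambda>x. h (u x))" "L2_on S (\<lambda>x. h (g x))"
    using H h by (auto simp: H1_rep_def intro: L2_on_compose_isometry)
  fix x y assume "x \<in> S" "y \<in> S" "x \<le> y"
  then have "(g has_integral (u y - u x)) {x..y}"
    using H by (auto simp: H1_rep_def)
  from has_integral_linear[OF this h(1)] show "((\<lambda>t. h (g t)) has_integral (h (u y) - h (u x))) {x..y}"
    by (simp add: o_def linear_diff[OF bounded_linear.linear[OF h(1)]])
qed

lemma norm_sigma3 [simp]: "norm (sigma3 z) = norm z"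
  by (cases z) (simp add: sigma3_def norm_Pair)

lemma sigma3_sigma3 [simp]: "sigma3 (sigma3 z) = z"
  by (simp add: sigma3_def)

lemma bounded_linear_sigma3: "bounded_linear sigma3"
  unfolding sigma3_def by (intro bounded_linear_Pair bounded_linear_fst bounded_linear_minus bounded_linear_snd)

lemma L2_on_sigma3_iff: "L2_on S (\<lambda>x. sigma3 (f x)) \<longleftrightarrow> L2_on S f"
  using L2_on_compose_isometry[OF bounded_linear_sigma3 norm_sigma3, of S f]
    L2_on_compose_isometry[OF bounded_linear_sigma3 norm_sigma3, of S "\<lambda>x. sigma3 (f x)"]
  by auto

lemma dirac_sigma3: "dirac m (sigma3 u) (- sigma3 u') = sigma3 (dirac m u u')"
  by (simp add: dirac_def sigma3_def algebra_simps)

lemma P_op_P_op [simp]: "P_op Jm (P_op Jm Phi) = Phi"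
  by (simp add: P_op_def fun_eq_iff)

lemma P_op_apply:
  "P_op Jm Phi j = (if j \<in> Jm then (\<lambda>x. sigma3 (Phi j (- x))) else Phi j)"
  by (simp add: P_op_def fun_eq_iff)

lemma rev_graph_simps [simp]:
  "verts (rev_graph G Jm) = verts G"
  "iedges (rev_graph G Jm) = iedges G" "eedges (rev_graph G Jm) = eedges G"
  "edges (rev_graph G Jm) = edges G"
  "ini (rev_graph G Jm) j = (if j \<in> Jm then ter G j else ini G j)"
  "ter (rev_graph G Jm) j = (if j \<in> Jm then ini G j else ter G j)"
  "lo (rev_graph G Jm) j = (if j \<in> Jm then - hi G j else lo G j)"
  "hi (rev_graph G Jm) j = (if j \<in> Jm then - lo G j else hi G j)"
  by (auto simp: rev_graph_def edges_def)

lemma rev_graph_rev_graph [simp]: "rev_graph (rev_graph G Jm) Jm = G"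
  by (simp add: rev_graph_def fun_eq_iff)

lemma mgraph_wf_rev_graph:
  assumes wf: "mgraph_wf G"
  shows "mgraph_wf (rev_graph G Jm)"
proof -
  let ?R = "rev_graph G Jm"
  have int: "ini ?R i \<in> verts G \<and> ter ?R i \<in> verts G \<and> ini ?R i \<noteq> ter ?R i \<and>
      (\<exists>a b. lo ?R i = ereal a \<and> hi ?R i = ereal b \<and> a < b)" if "i \<in> iedges G" for i
  proof -
    have "ini G i \<in> verts G \<and> ter G i \<in> verts G \<and> ini G i \<noteq> ter G i \<and>
        (\<exists>a b. lo G i = ereal a \<and> hi G i = ereal b \<and> a < b)"
      using wf that by (simp add: mgraph_wf_def)
    then obtain a b where "lo G i = ereal a" "hi G i = ereal b" "a < b"
      and "ini G i \<in> verts G" "ter G i \<in> verts G" "ini G i \<noteq> ter G i"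
      by blast
    then show ?thesis
      by (cases "i \<in> Jm") (auto intro!: exI[of _ "- b"] exI[of _ "- a"])
  qed
  have ext: "(ini ?R e \<in> verts G \<and> (\<exists>a. lo ?R e = ereal a) \<and> hi ?R e = \<infinity>) \<or>
      (ter ?R e \<in> verts G \<and> lo ?R e = -\<infinity> \<and> (\<exists>b. hi ?R e = ereal b))" if "e \<in> eedges G" for e
  proof -
    have "(ini G e \<in> verts G \<and> (\<exists>a. lo G e = ereal a) \<and> hi G e = \<infinity>) \<or>
        (ter G e \<in> verts G \<and> lo G e = -\<infinity> \<and> (\<exists>b. hi G e = ereal b))"
      using wf that by (simp add: mgraph_wf_def)
    then show ?thesis
      by (cases "e \<in> Jm") auto
  qed
  show ?thesis
    using wf int ext by (simp add: mgraph_wf_def edges_def)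
qed

lemma sets_lebesgue_edge_set: "edge_set G j \<in> sets lebesgue"
proof -
  have "open (edge_set G j)"
    unfolding edge_set_def by (intro open_Collect_conj open_Collect_less continuous_intros)
  then show ?thesis
    by (metis borel_open sets_completionI_sets sets_lborel)
qed

lemma edge_set_rev_graph:
  "edge_set (rev_graph G Jm) j = (if j \<in> Jm then uminus ` edge_set G j else edge_set G j)"
proof -
  have "- hi G j < ereal x \<and> ereal x < - lo G j \<longleftrightarrow> lo G j < ereal (- x) \<and> ereal (- x) < hi G j"
    for x
    using ereal_uminus_less_reorder[of "hi G j" "ereal x"] ereal_less_uminus_reorder[of "ereal x" "lo G j"]
    by auto
  then show ?thesis
    by (auto simp: edge_set_def uminus_image_eq_vimage)
qed

lemma rho_rev_graph:
  assumes "mgraph_wf G" and "e \<in> eedges G"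
  shows "rho (rev_graph G Jm) e = (if e \<in> Jm then - rho G e else rho G e)"
  using assms by (auto simp: mgraph_wf_def rho_def)

lemma rho_cases: "rho G e = -1 \<or> rho G e = 1"
  by (simp add: rho_def)

lemma WGamma1_rev_graph:
  assumes "mgraph_wf G"
  shows "WGamma1 (rev_graph G Jm) (P_op Jm U) = WGamma1 G U"
proof (intro ext, clarify)
  fix j v
  have "ini G j \<noteq> ter G j" if "j \<in> iedges G"
    using assms that by (simp add: mgraph_wf_def)
  then show "WGamma1 (rev_graph G Jm) (P_op Jm U) (j, v) = WGamma1 G U (j, v)"
    using rho_rev_graph[OF assms, of j Jm] rho_cases[of G j]
    by (auto simp: WGamma1_def P_op_def aa_def bb_def sigma3_def)
qed

lemma WGamma2_rev_graph:
  assumes "mgraph_wf G"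
  shows "WGamma2 (rev_graph G Jm) (P_op Jm U) = WGamma2 G U"
proof (intro ext, clarify)
  fix j v
  have "ini G j \<noteq> ter G j" if "j \<in> iedges G"
    using assms that by (simp add: mgraph_wf_def)
  then show "WGamma2 (rev_graph G Jm) (P_op Jm U) (j, v) = WGamma2 G U (j, v)"
    using rho_rev_graph[OF assms, of j Jm] rho_cases[of G j]
    by (auto simp: WGamma2_def P_op_def aa_def bb_def sigma3_def)
qed

lemma L2_on_P_op_iff:
  "L2_on (edge_set (rev_graph G Jm) j) (P_op Jm Phi j) \<longleftrightarrow> L2_on (edge_set G j) (Phi j)"
  by (simp add: P_op_apply edge_set_rev_graph L2_on_sigma3_iff L2_on_uminus_image_iff
      sets_lebesgue_edge_set)

lemma integral_norm_P_op:
  "integral\<^sup>L (lebesgue_on (edge_set (rev_graph G Jm) j)) (\<lambda>x. (norm (P_op Jm Phi j x))\<^sup>2)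
     = integral\<^sup>L (lebesgue_on (edge_set G j)) (\<lambda>x. (norm (Phi j x))\<^sup>2)"
  using integral_lebesgue_on_uminus_image[OF sets_lebesgue_edge_set, of G j "\<lambda>x. (norm (Phi j x))\<^sup>2"]
  by (simp add: P_op_apply edge_set_rev_graph)

lemma dirac_solution_uminus_image:
  assumes S: "S \<in> sets lebesgue" and H: "H1_rep S u u'"
    and phi: "AE x in lebesgue_on S. phi x = u x"
    and psi: "AE x in lebesgue_on S. psi x = dirac m (u x) (u' x)"
  shows "H1_rep (uminus ` S) (\<lambda>x. sigma3 (u (- x))) (\<lambda>x. - sigma3 (u' (- x)))"
    and "AE x in lebesgue_on (uminus ` S). sigma3 (phi (- x)) = sigma3 (u (- x))"
    and "AE x in lebesgue_on (uminus ` S).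
           sigma3 (psi (- x)) = dirac m (sigma3 (u (- x))) (- sigma3 (u' (- x)))"
proof -
  show "H1_rep (uminus ` S) (\<lambda>x. sigma3 (u (- x))) (\<lambda>x. - sigma3 (u' (- x)))"
    using H1_rep_compose_isometry[OF bounded_linear_sigma3 norm_sigma3 H1_rep_uminus_image[OF S H]]
    by (simp add: linear_neg[OF bounded_linear.linear[OF bounded_linear_sigma3]])
  show "AE x in lebesgue_on (uminus ` S). sigma3 (phi (- x)) = sigma3 (u (- x))"
    using AE_lebesgue_on_uminus_image[OF S phi] by eventually_elim simp
  show "AE x in lebesgue_on (uminus ` S).
      sigma3 (psi (- x)) = dirac m (sigma3 (u (- x))) (- sigma3 (u' (- x)))"
    using AE_lebesgue_on_uminus_image[OF S psi] by eventually_elim (simp add: dirac_sigma3)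
qed

lemma D_graph_rev_graph:
  assumes wf: "mgraph_wf G" and D: "D_graph G m \<Lambda> Phi Psi"
  shows "D_graph (rev_graph G Jm) m \<Lambda> (P_op Jm Phi) (P_op Jm Psi)"
proof -
  obtain U Up where U: "\<And>j. j \<in> edges G \<Longrightarrow> H1_rep (edge_set G j) (U j) (Up j) \<and>
        (AE x in lebesgue_on (edge_set G j). Phi j x = U j x) \<and>
        (AE x in lebesgue_on (edge_set G j). Psi j x = dirac m (U j x) (Up j x))"
    and vertex: "(WGamma1 G U, WGamma2 G U) \<in> \<Lambda>"
    using D unfolding D_graph_def by blast
  define Up' where "Up' = (\<lambda>j x. if j \<in> Jm then - sigma3 (Up j (- x)) else Up j x)"
  have "H1_rep (edge_set (rev_graph G Jm) j) (P_op Jm U j) (Up' j) \<and>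
      (AE x in lebesgue_on (edge_set (rev_graph G Jm) j). P_op Jm Phi j x = P_op Jm U j x) \<and>
      (AE x in lebesgue_on (edge_set (rev_graph G Jm) j).
         P_op Jm Psi j x = dirac m (P_op Jm U j x) (Up' j x))"
    if "j \<in> edges G" for j
  proof -
    have H: "H1_rep (edge_set G j) (U j) (Up j)"
      and phi: "AE x in lebesgue_on (edge_set G j). Phi j x = U j x"
      and psi: "AE x in lebesgue_on (edge_set G j). Psi j x = dirac m (U j x) (Up j x)"
      using U that by auto
    show ?thesis
    proof (cases "j \<in> Jm")
      case True
      then have rev_edge: "edge_set (rev_graph G Jm) j = uminus ` edge_set G j"
        by (simp add: edge_set_rev_graph)
      show ?thesis
        using True dirac_solution_uminus_image[OF sets_lebesgue_edge_set H phi psi]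
        unfolding rev_edge P_op_apply Up'_def by simp
    next
      case False
      then have rev_edge: "edge_set (rev_graph G Jm) j = edge_set G j"
        by (simp add: edge_set_rev_graph)
      show ?thesis
        using False H phi psi unfolding rev_edge P_op_apply Up'_def by simp
    qed
  qed
  moreover have "(WGamma1 (rev_graph G Jm) (P_op Jm U), WGamma2 (rev_graph G Jm) (P_op Jm U)) \<in> \<Lambda>"
    using vertex by (simp add: WGamma1_rev_graph[OF wf] WGamma2_rev_graph[OF wf])
  ultimately show ?thesis
    unfolding D_graph_def rev_graph_simps by blast
qed

lemma D_graph_rev_graph_iff:
  assumes wf: "mgraph_wf G"
  shows "D_graph (rev_graph G Jm) m \<Lambda> (P_op Jm Phi) (P_op Jm Psi) \<longleftrightarrow> D_graph G m \<Lambda> Phi Psi"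
proof
  assume "D_graph (rev_graph G Jm) m \<Lambda> (P_op Jm Phi) (P_op Jm Psi)"
  from D_graph_rev_graph[OF mgraph_wf_rev_graph[OF wf] this, of Jm]
  show "D_graph G m \<Lambda> Phi Psi" by simp
qed (rule D_graph_rev_graph[OF wf])

theorem theorem4p6:
  fixes G :: "('v, 'e) mgraph" and Jm :: "'e set" and m :: real
    and \<Lambda> :: "(('e \<times> 'v \<Rightarrow> complex) \<times> ('e \<times> 'v \<Rightarrow> complex)) set"
  assumes "mgraph_wf G"
    and "m \<ge> 0"
    and "Jm \<subseteq> edges G"
    and "linear_relation (vertex_space G) \<Lambda>"
  shows "(\<forall>Phi Psi. D_graph (rev_graph G Jm) m \<Lambda> (P_op Jm Phi) (P_op Jm Psi)
                     \<longleftrightarrow> D_graph G m \<Lambda> Phi Psi)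
     \<and> (\<forall>Phi. P_op Jm (P_op Jm Phi) = Phi)
     \<and> (\<forall>Phi. \<forall>j\<in>edges G.
          (L2_on (edge_set (rev_graph G Jm) j) (P_op Jm Phi j) \<longleftrightarrow> L2_on (edge_set G j) (Phi j)) \<and>
          integral\<^sup>L (lebesgue_on (edge_set (rev_graph G Jm) j)) (\<lambda>x. (norm (P_op Jm Phi j x))\<^sup>2)
            = integral\<^sup>L (lebesgue_on (edge_set G j)) (\<lambda>x. (norm (Phi j x))\<^sup>2))"
  using assms(1) by (simp add: D_graph_rev_graph_iff L2_on_P_op_iff integral_norm_P_op)

end
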